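(* If $T$ is a subcubic tree, then $\gamma(T)=\gamma_{e,f}^*(T)$ if and only if $T$ is $K_{1,3}$.
   Context: All graphs are finite, simple and undirected; subcubic means maximum degree at most $3$; $K_{1,3}$ is the star with three leaves. $\gamma(G)$ is the domination number of $G$ (minimum size of a set $D$ such that every vertex not in $D$ has a neighbor in $D$). The fractional porous exponential domination number $\gamma_{e,f}^*(G)$ is the optimum value of the linear program: minimize $\sum_{u\in V(G)}x(u)$ subject to $\sum_{u\in V(G)}\left(\frac12\right)^{\mathrm{dist}_G(u,v)-1}x(u)\ge 1$ for every $v\in V(G)$ and $x\ge 0$, where $\mathrm{dist}_G$ is the usual distance and $\left(\frac12\right)^\infty=0$. *)

theory Defs
  imports Complex_Main
begin

definition graph :: "'a set \<Rightarrow> ('a \<Rightarrow> 'a \<Rightarrow> bool) \<Rightarrow> bool" where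
  "graph V E \<longleftrightarrow> finite V \<and> (\<forall>u v. E u v \<longrightarrow> u \<in> V \<and> v \<in> V)
     \<and> (\<forall>u v. E u v \<longrightarrow> E v u) \<and> (\<forall>v. \<not> E v v)"

definition degree :: "'a set \<Rightarrow> ('a \<Rightarrow> 'a \<Rightarrow> bool) \<Rightarrow> 'a \<Rightarrow> nat" where
  "degree V E v = card {u \<in> V. E v u}"

definition subcubic :: "'a set \<Rightarrow> ('a \<Rightarrow> 'a \<Rightarrow> bool) \<Rightarrow> bool" where
  "subcubic V E \<longleftrightarrow> (\<forall>v\<in>V. degree V E v \<le> 3)"

definition walk :: "'a set \<Rightarrow> ('a \<Rightarrow> 'a \<Rightarrow> bool) \<Rightarrow> 'a list \<Rightarrow> bool" where
  "walk V E xs \<longleftrightarrow> xs \<noteq> [] \<and> set xs \<subseteq> V \<and> (\<forall>i. Suc i < length xs \<longrightarrow> E (xs ! i) (xs ! Suc i))"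

definition reachable :: "'a set \<Rightarrow> ('a \<Rightarrow> 'a \<Rightarrow> bool) \<Rightarrow> 'a \<Rightarrow> 'a \<Rightarrow> bool" where
  "reachable V E u v \<longleftrightarrow> (\<exists>xs. walk V E xs \<and> hd xs = u \<and> last xs = v)"

definition connected_graph :: "'a set \<Rightarrow> ('a \<Rightarrow> 'a \<Rightarrow> bool) \<Rightarrow> bool" where
  "connected_graph V E \<longleftrightarrow> V \<noteq> {} \<and> (\<forall>u\<in>V. \<forall>v\<in>V. reachable V E u v)"

definition is_cycle :: "'a set \<Rightarrow> ('a \<Rightarrow> 'a \<Rightarrow> bool) \<Rightarrow> 'a list \<Rightarrow> bool" where
  "is_cycle V E xs \<longleftrightarrow> length xs \<ge> 3 \<and> distinct xs \<and> walk V E xs \<and> E (last xs) (hd xs)"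

definition acyclic_graph :: "'a set \<Rightarrow> ('a \<Rightarrow> 'a \<Rightarrow> bool) \<Rightarrow> bool" where
  "acyclic_graph V E \<longleftrightarrow> \<not> (\<exists>xs. is_cycle V E xs)"

definition tree :: "'a set \<Rightarrow> ('a \<Rightarrow> 'a \<Rightarrow> bool) \<Rightarrow> bool" where
  "tree V E \<longleftrightarrow> graph V E \<and> connected_graph V E \<and> acyclic_graph V E"

text \<open>Distance (number of edges of a shortest walk); only meaningful if reachable.\<close>
definition gdist :: "'a set \<Rightarrow> ('a \<Rightarrow> 'a \<Rightarrow> bool) \<Rightarrow> 'a \<Rightarrow> 'a \<Rightarrow> nat" where
  "gdist V E u v = (LEAST n. \<exists>xs. walk V E xs \<and> hd xs = u \<and> last xs = v \<and> length xs = Suc n)"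

text \<open>The weight (1/2)^(dist(u,v) - 1), with (1/2)^\<infinity> = 0.\<close>
definition exp_weight :: "'a set \<Rightarrow> ('a \<Rightarrow> 'a \<Rightarrow> bool) \<Rightarrow> 'a \<Rightarrow> 'a \<Rightarrow> real" where
  "exp_weight V E u v = (if reachable V E u v then (1/2) powi (int (gdist V E u v) - 1) else 0)"

definition frac_porous_feasible :: "'a set \<Rightarrow> ('a \<Rightarrow> 'a \<Rightarrow> bool) \<Rightarrow> ('a \<Rightarrow> real) \<Rightarrow> bool" where
  "frac_porous_feasible V E x \<longleftrightarrow> (\<forall>u\<in>V. x u \<ge> 0) \<and>
     (\<forall>v\<in>V. (\<Sum>u\<in>V. exp_weight V E u v * x u) \<ge> 1)"

text \<open>Optimum value of the LP (it is attained; we take the infimum of feasible objective values).\<close>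
definition frac_porous_exp_dom :: "'a set \<Rightarrow> ('a \<Rightarrow> 'a \<Rightarrow> bool) \<Rightarrow> real" where
  "frac_porous_exp_dom V E = Inf {(\<Sum>u\<in>V. x u) | x. frac_porous_feasible V E x}"

definition dominating :: "'a set \<Rightarrow> ('a \<Rightarrow> 'a \<Rightarrow> bool) \<Rightarrow> 'a set \<Rightarrow> bool" where
  "dominating V E D \<longleftrightarrow> D \<subseteq> V \<and> (\<forall>v\<in>V - D. \<exists>u\<in>D. E u v)"

definition domination_number :: "'a set \<Rightarrow> ('a \<Rightarrow> 'a \<Rightarrow> bool) \<Rightarrow> nat" where
  "domination_number V E = Min (card ` {D. dominating V E D})"

definition is_K13 :: "'a set \<Rightarrow> ('a \<Rightarrow> 'a \<Rightarrow> bool) \<Rightarrow> bool" where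
  "is_K13 V E \<longleftrightarrow> (\<exists>f. bij_betw f V {0..(3::nat)} \<and>
     (\<forall>u\<in>V. \<forall>v\<in>V. E u v \<longleftrightarrow> ((f u = 0 \<and> f v \<noteq> 0) \<or> (f v = 0 \<and> f u \<noteq> 0))))"

end

(*
  If D is a dominating set of a connected graph with |D| >= 2, every vertex receives weight at
  least 1 from a vertex of D dominating it and positive weight from another one; so the column
  sums of D exceed some s > 1, and weight 1/s on D is a feasible solution of value |D|/s < |D|.
  Hence equality forces domination number 1: the tree is a star K_{1,k}, with k <= 3 since it is
  subcubic. For k <= 2 the uniform solution has value below 1, whereas the three pairwise
  non-adjacent leaves of K_{1,3} give three constraints whose sum bounds the objective below by 1.
*)
theory Submission
  imports Defs
begin

lemma walk_singleton: "v \<in> V \<Longrightarrow> walk V E [v]"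
  by (simp add: walk_def)

lemma walk_Cons_Cons: "walk V E (v # xs) \<Longrightarrow> u \<in> V \<Longrightarrow> E u v \<Longrightarrow> walk V E (u # v # xs)"
  by (auto simp: walk_def nth_Cons less_Suc_eq_0_disj split: nat.split)

lemma gdist_le_length:
  assumes "walk V E xs" "hd xs = u" "last xs = v"
  shows "gdist V E u v \<le> length xs - 1"
proof -
  have "length xs = Suc (length xs - 1)"
    using assms(1) by (simp add: walk_def)
  then show ?thesis
    unfolding gdist_def using assms by (intro Least_le) blast
qed

lemma reachable_gdist_walk:
  assumes "reachable V E u v"
  obtains xs where "walk V E xs" "hd xs = u" "last xs = v" "length xs = Suc (gdist V E u v)"
proof -
  obtain xs where xs: "walk V E xs" "hd xs = u" "last xs = v"
    using assms unfolding reachable_def by blast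
  then have "length xs = Suc (length xs - 1)"
    by (simp add: walk_def)
  with xs have "\<exists>n xs. walk V E xs \<and> hd xs = u \<and> last xs = v \<and> length xs = Suc n"
    by blast
  from LeastI_ex[OF this] show ?thesis
    using that unfolding gdist_def by blast
qed

lemma gdist_eq_0_imp_eq: "reachable V E u v \<Longrightarrow> gdist V E u v = 0 \<Longrightarrow> u = v"
  by (elim reachable_gdist_walk) (auto simp: length_Suc_conv)

lemma gdist_eq_1_imp_edge:
  assumes "reachable V E u v" "gdist V E u v = 1"
  shows "E u v"
proof -
  obtain xs where "walk V E xs" "hd xs = u" "last xs = v" "length xs = Suc (Suc 0)"
    using reachable_gdist_walk[OF assms(1)] unfolding assms(2) by auto
  then show ?thesis
    by (auto simp: walk_def length_Suc_conv)
qed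

lemma exp_weight_reachable:
  "reachable V E u v \<Longrightarrow>
   exp_weight V E u v = (if gdist V E u v = 0 then 2 else (1/2) ^ (gdist V E u v - 1))"
  by (cases "gdist V E u v") (auto simp: exp_weight_def power_int_def)

lemma exp_weight_nonneg: "0 \<le> exp_weight V E u v"
  by (simp add: exp_weight_def)

lemma exp_weight_pos: "reachable V E u v \<Longrightarrow> 0 < exp_weight V E u v"
  by (simp add: exp_weight_reachable)

lemma exp_weight_self:
  assumes "v \<in> V"
  shows "exp_weight V E v v = 2"
proof -
  have "reachable V E v v" "gdist V E v v = 0"
    using walk_singleton[OF assms] gdist_le_length[OF walk_singleton[OF assms]]
    unfolding reachable_def by force+
  then show ?thesis
    by (simp add: exp_weight_reachable)
qed

lemma exp_weight_le_1:
  assumes "u \<noteq> v"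
  shows "exp_weight V E u v \<le> 1"
proof (cases "reachable V E u v")
  case True
  then show ?thesis
    using assms gdist_eq_0_imp_eq[OF True] by (auto simp: exp_weight_reachable power_le_one)
qed (simp add: exp_weight_def)

lemma exp_weight_nonadjacent_le:
  assumes "u \<noteq> v" "\<not> E u v"
  shows "exp_weight V E u v \<le> 1/2"
proof (cases "reachable V E u v")
  case True
  then have "gdist V E u v \<noteq> 0" "gdist V E u v \<noteq> 1"
    using assms gdist_eq_0_imp_eq[OF True] gdist_eq_1_imp_edge[OF True] by auto
  then obtain k where "gdist V E u v = Suc (Suc k)"
    by (metis One_nat_def not0_implies_Suc)
  then show ?thesis
    using True by (simp add: exp_weight_reachable power_le_one)
qed (simp add: exp_weight_def)

lemma exp_weight_edge_ge_1:
  assumes "graph V E" "E u v"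
  shows "1 \<le> exp_weight V E u v"
proof -
  have walk: "walk V E [u, v]"
    using assms by (intro walk_Cons_Cons walk_singleton) (auto simp: graph_def)
  then have "gdist V E u v \<le> 1"
    using gdist_le_length[OF walk refl refl] by simp
  moreover have "reachable V E u v"
    using walk unfolding reachable_def by force
  ultimately show ?thesis
    by (auto simp: exp_weight_reachable le_Suc_eq)
qed

lemma exp_weight_path2_ge:
  assumes "graph V E" "E u w" "E w v"
  shows "1/2 \<le> exp_weight V E u v"
proof -
  have walk: "walk V E [u, w, v]"
    using assms by (intro walk_Cons_Cons walk_singleton) (auto simp: graph_def)
  then have "gdist V E u v \<le> 2"
    using gdist_le_length[OF walk refl refl] by simp
  moreover have "reachable V E u v"
    using walk unfolding reachable_def by force
  ultimately show ?thesis
    by (auto simp: exp_weight_reachable le_Suc_eq numeral_2_eq_2)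
qed

lemma frac_porous_exp_dom_le:
  assumes "frac_porous_feasible V E x"
  shows "frac_porous_exp_dom V E \<le> (\<Sum>u\<in>V. x u)"
  unfolding frac_porous_exp_dom_def
proof (rule cInf_lower)
  show "bdd_below {\<Sum>u\<in>V. x u |x. frac_porous_feasible V E x}"
    by (rule bdd_belowI[of _ 0]) (auto simp: frac_porous_feasible_def intro!: sum_nonneg)
qed (use assms in blast)

lemma frac_porous_exp_dom_greatest:
  assumes "frac_porous_feasible V E x0"
    and "\<And>x. frac_porous_feasible V E x \<Longrightarrow> c \<le> (\<Sum>u\<in>V. x u)"
  shows "c \<le> frac_porous_exp_dom V E"
  unfolding frac_porous_exp_dom_def by (rule cInf_greatest) (use assms in auto)

lemma frac_porous_feasible_half:
  assumes "finite V"
  shows "frac_porous_feasible V E (\<lambda>_. 1/2)"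
  unfolding frac_porous_feasible_def
proof (intro conjI ballI)
  fix v assume "v \<in> V"
  then have "exp_weight V E v v * (1/2) \<le> (\<Sum>u\<in>V. exp_weight V E u v * (1/2))"
    using assms by (intro member_le_sum) (auto simp: exp_weight_nonneg)
  then show "1 \<le> (\<Sum>u\<in>V. exp_weight V E u v * (1/2))"
    using exp_weight_self[OF \<open>v \<in> V\<close>] by simp
qed simp

lemma frac_porous_exp_dom_le_column_sum:
  assumes "finite V" "D \<subseteq> V" "0 < s"
    and column: "\<And>v. v \<in> V \<Longrightarrow> s \<le> (\<Sum>u\<in>D. exp_weight V E u v)"
  shows "frac_porous_exp_dom V E \<le> real (card D) / s"
proof -
  define x where "x u = (if u \<in> D then 1 / s else 0)" for u
  have restrict: "(\<Sum>u\<in>V. f u * x u) = (\<Sum>u\<in>D. f u) / s" for f :: "'a \<Rightarrow> real"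
  proof -
    have "(\<Sum>u\<in>V. f u * x u) = (\<Sum>u\<in>D. f u * (1 / s))"
      using assms(1,2) by (intro sum.mono_neutral_cong_right) (auto simp: x_def)
    then show ?thesis
      by (simp add: sum_divide_distrib)
  qed
  have "frac_porous_feasible V E x"
    unfolding frac_porous_feasible_def restrict
    using column assms(3) by (auto simp: x_def)
  from frac_porous_exp_dom_le[OF this] show ?thesis
    using restrict[of "\<lambda>_. 1"] by simp
qed

lemma finite_dominating_sets: "finite V \<Longrightarrow> finite {D. dominating V E D}"
  by (rule finite_subset[of _ "Pow V"]) (auto simp: dominating_def)

lemma obtain_minimum_dominating_set:
  assumes "finite V"
  obtains D where "dominating V E D" "card D = domination_number V E"
proof -
  have "dominating V E V"
    by (simp add: dominating_def)
  then have "domination_number V E \<in> card ` {D. dominating V E D}"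
    unfolding domination_number_def using finite_dominating_sets[OF assms]
    by (intro Min_in) auto
  then obtain D where "dominating V E D" "domination_number V E = card D"
    by blast
  with that show ?thesis
    by simp
qed

lemma domination_number_le_card:
  "finite V \<Longrightarrow> dominating V E D \<Longrightarrow> domination_number V E \<le> card D"
  unfolding domination_number_def using finite_dominating_sets[of V E] by (intro Min_le) auto

lemma domination_number_pos:
  assumes "finite V" "V \<noteq> {}"
  shows "0 < domination_number V E"
proof -
  obtain D where "dominating V E D" "card D = domination_number V E"
    using obtain_minimum_dominating_set[OF assms(1)] .
  then show ?thesis
    using assms finite_subset by (fastforce simp: dominating_def card_gt_0_iff)
qed

lemma dominating_exp_weight_ge_1:
  assumes "graph V E" "dominating V E D" "v \<in> V"
  obtains u where "u \<in> D" "1 \<le> exp_weight V E u v"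
proof (cases "v \<in> D")
  case True
  then show ?thesis
    using that exp_weight_self[OF assms(3)] by simp
next
  case False
  then obtain u where "u \<in> D" "E u v"
    using assms(2,3) by (auto simp: dominating_def)
  then show ?thesis
    using that exp_weight_edge_ge_1[OF assms(1)] by blast
qed

lemma dominating_column_sum_ge_1:
  assumes "graph V E" "dominating V E D" "v \<in> V"
  shows "1 \<le> (\<Sum>u\<in>D. exp_weight V E u v)"
proof -
  have "finite D"
    using assms(1,2) finite_subset by (auto simp: graph_def dominating_def)
  obtain u where "u \<in> D" "1 \<le> exp_weight V E u v"
    using dominating_exp_weight_ge_1[OF assms] .
  moreover have "exp_weight V E u v \<le> (\<Sum>u\<in>D. exp_weight V E u v)"
    using \<open>u \<in> D\<close> \<open>finite D\<close> by (intro member_le_sum) (auto simp: exp_weight_nonneg)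
  ultimately show ?thesis
    by linarith
qed

lemma dominating_column_sum_gt_1:
  assumes "graph V E" "connected_graph V E" "dominating V E D" "2 \<le> card D" "v \<in> V"
  shows "1 < (\<Sum>u\<in>D. exp_weight V E u v)"
proof -
  have "finite D" "D \<subseteq> V"
    using assms(1,3) finite_subset by (auto simp: graph_def dominating_def)
  obtain u where u: "u \<in> D" "1 \<le> exp_weight V E u v"
    using dominating_exp_weight_ge_1[OF assms(1,3,5)] .
  obtain u' where u': "u' \<in> D - {u}"
  proof -
    have "card (D - {u}) \<noteq> 0"
      using assms(4) u(1) \<open>finite D\<close> by simp
    then show ?thesis
      using that by (metis card.empty ex_in_conv)
  qed
  have "0 < exp_weight V E u' v"
    using assms(2,5) u' \<open>D \<subseteq> V\<close> by (intro exp_weight_pos) (auto simp: connected_graph_def)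
  moreover have "exp_weight V E u' v \<le> (\<Sum>w\<in>D - {u}. exp_weight V E w v)"
    using u' \<open>finite D\<close> by (intro member_le_sum) (auto simp: exp_weight_nonneg)
  ultimately show ?thesis
    using u(2) sum.remove[OF \<open>finite D\<close> u(1), of "\<lambda>w. exp_weight V E w v"] by linarith
qed

lemma frac_porous_exp_dom_le_domination_number:
  assumes "graph V E"
  shows "frac_porous_exp_dom V E \<le> domination_number V E"
proof -
  have "finite V"
    using assms by (simp add: graph_def)
  then obtain D where "dominating V E D" "card D = domination_number V E"
    using obtain_minimum_dominating_set by blast
  then show ?thesis
    using frac_porous_exp_dom_le_column_sum[of V D 1 E] dominating_column_sum_ge_1[OF assms]
    by (simp add: \<open>finite V\<close> dominating_def)
qed

lemma frac_porous_exp_dom_lt_domination_number: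
  assumes "graph V E" "connected_graph V E" "2 \<le> domination_number V E"
  shows "frac_porous_exp_dom V E < domination_number V E"
proof -
  have "finite V" "V \<noteq> {}"
    using assms(1,2) by (simp_all add: graph_def connected_graph_def)
  obtain D where D: "dominating V E D" "card D = domination_number V E"
    using obtain_minimum_dominating_set[OF \<open>finite V\<close>] .
  define s where "s = Min ((\<lambda>v. \<Sum>u\<in>D. exp_weight V E u v) ` V)"
  have "s \<in> (\<lambda>v. \<Sum>u\<in>D. exp_weight V E u v) ` V"
    unfolding s_def using \<open>finite V\<close> \<open>V \<noteq> {}\<close> by (intro Min_in) auto
  then have "1 < s"
    using dominating_column_sum_gt_1[OF assms(1,2) D(1)] assms(3) D(2) by auto
  moreover have "frac_porous_exp_dom V E \<le> real (card D) / s"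
    using \<open>finite V\<close> D(1) \<open>1 < s\<close> unfolding s_def
    by (intro frac_porous_exp_dom_le_column_sum) (auto simp: dominating_def)
  moreover have "real (card D) / s < real (card D)"
    using \<open>1 < s\<close> assms(3) D(2) by (simp add: divide_less_eq)
  ultimately show ?thesis
    using D(2) by linarith
qed

text \<open>Summing the constraints of a feasible solution over an independent set \<open>A\<close> with
  \<open>|A| \<ge> 3\<close>: a vertex of \<open>A\<close> contributes at most \<open>2 + (|A| - 1)/2 \<le> |A|\<close> to the sum of its
  weights towards \<open>A\<close>, any other vertex at most \<open>|A|\<close>.\<close>
lemma one_le_frac_porous_exp_dom_if_independent:
  assumes "finite V" "A \<subseteq> V" "3 \<le> card A"
    and independent: "\<And>a b. a \<in> A \<Longrightarrow> b \<in> A \<Longrightarrow> \<not> E a b"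
  shows "1 \<le> frac_porous_exp_dom V E"
proof (rule frac_porous_exp_dom_greatest[OF frac_porous_feasible_half[OF assms(1)]])
  fix x assume x: "frac_porous_feasible V E x"
  define k where "k = real (card A)"
  have "finite A"
    using assms(1,2) finite_subset by blast
  have "3 \<le> k"
    using assms(3) by (simp add: k_def)
  have row: "(\<Sum>v\<in>A. exp_weight V E u v) \<le> k" if "u \<in> V" for u
  proof (cases "u \<in> A")
    case True
    have "(\<Sum>v\<in>A - {u}. exp_weight V E u v) \<le> real (card (A - {u})) * (1/2)"
      using independent True by (intro sum_bounded_above exp_weight_nonadjacent_le) auto
    moreover have "real (card (A - {u})) = k - 1"
      using True \<open>finite A\<close> assms(3) by (simp add: k_def of_nat_diff)
    ultimately show ?thesis
      using sum.remove[OF \<open>finite A\<close> True, of "\<lambda>v. exp_weight V E u v"]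
        exp_weight_self[OF that, of E] \<open>3 \<le> k\<close> by linarith
  next
    case False
    then have "(\<Sum>v\<in>A. exp_weight V E u v) \<le> real (card A) * 1"
      by (intro sum_bounded_above exp_weight_le_1) auto
    then show ?thesis
      by (simp add: k_def)
  qed
  have "k * 1 \<le> (\<Sum>v\<in>A. \<Sum>u\<in>V. exp_weight V E u v * x u)"
    unfolding k_def using x assms(2) by (intro sum_bounded_below) (auto simp: frac_porous_feasible_def)
  also have "\<dots> = (\<Sum>u\<in>V. x u * (\<Sum>v\<in>A. exp_weight V E u v))"
    by (subst sum.swap) (simp add: sum_distrib_left mult.commute)
  also have "\<dots> \<le> (\<Sum>u\<in>V. x u * k)"
    using x row by (intro sum_mono mult_left_mono) (auto simp: frac_porous_feasible_def)
  also have "\<dots> = k * (\<Sum>u\<in>V. x u)"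
    by (simp add: sum_distrib_left mult.commute)
  finally show "1 \<le> (\<Sum>u\<in>V. x u)"
    using assms(3) by (simp add: k_def mult_le_cancel_left1)
qed

lemma exp_weight_column_sum_ge:
  assumes "finite V" "v \<in> V" "u0 \<in> V" "u0 \<noteq> v" "1 \<le> exp_weight V E u0 v"
    and near: "\<And>u. u \<in> V \<Longrightarrow> u \<noteq> v \<Longrightarrow> 1/2 \<le> exp_weight V E u v"
  shows "real (card V) / 2 + 2 \<le> (\<Sum>u\<in>V. exp_weight V E u v)"
proof -
  let ?R = "V - {v} - {u0}"
  have "real (card ?R) * (1/2) \<le> (\<Sum>u\<in>?R. exp_weight V E u v)"
    using near by (intro sum_bounded_below) auto
  moreover have "real (card ?R) = real (card V) - 2"
  proof -
    have "card {v, u0} \<le> card V"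
      using assms(1-3) by (intro card_mono) auto
    then show ?thesis
      using assms(1-4) by (simp add: of_nat_diff)
  qed
  moreover have "(\<Sum>u\<in>V. exp_weight V E u v)
      = exp_weight V E v v + (exp_weight V E u0 v + (\<Sum>u\<in>?R. exp_weight V E u v))"
    using sum.remove[OF assms(1,2), of "\<lambda>u. exp_weight V E u v"]
      sum.remove[of "V - {v}" u0 "\<lambda>u. exp_weight V E u v"] assms(1,3,4) by simp
  ultimately show ?thesis
    using exp_weight_self[OF assms(2), of E] assms(5) by linarith
qed

text \<open>On two or three vertices, every vertex of such a star is adjacent to one other vertex and
  at distance at most two from all of them, so the uniform solution has value at most
  \<open>n / (n/2 + 2) < 1\<close>.\<close>
lemma frac_porous_exp_dom_lt_1_if_small_star:
  assumes graph: "graph V E" and "d \<in> V" and star: "\<And>v. v \<in> V \<Longrightarrow> v \<noteq> d \<Longrightarrow> E d v"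
    and "card V \<le> 3"
  shows "frac_porous_exp_dom V E < 1"
proof -
  have "finite V"
    using graph by (simp add: graph_def)
  have "card V \<noteq> 0"
    using \<open>d \<in> V\<close> \<open>finite V\<close> by auto
  then consider "card V = 1" | "2 \<le> card V"
    by linarith
  then show ?thesis
  proof cases
    case 1
    then show ?thesis
      using frac_porous_exp_dom_le[OF frac_porous_feasible_half[OF \<open>finite V\<close>, of E]] by simp
  next
    case 2
    have edge: "E u v" if "u \<in> V" "v \<in> V" "u \<noteq> v" "u = d \<or> v = d" for u v
      using that star graph by (auto simp: graph_def)
    have column: "real (card V) / 2 + 2 \<le> (\<Sum>u\<in>V. exp_weight V E u v)" if "v \<in> V" for v
    proof -
      obtain u0 where "u0 \<in> V" "u0 \<noteq> v" "u0 = d \<or> v = d"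
        using 2 \<open>d \<in> V\<close> \<open>finite V\<close>
        by (metis card_le_Suc0_iff_eq not_less_eq_eq numeral_2_eq_2)
      moreover have "1/2 \<le> exp_weight V E u v" if "u \<in> V" "u \<noteq> v" for u
      proof (cases "u = d \<or> v = d")
        case True
        then show ?thesis
          using that \<open>v \<in> V\<close> edge exp_weight_edge_ge_1[OF graph, of u v] by simp
      next
        case False
        then have "E u d" "E d v"
          using that \<open>v \<in> V\<close> \<open>d \<in> V\<close> edge by auto
        then show ?thesis
          by (rule exp_weight_path2_ge[OF graph])
      qed
      ultimately show ?thesis
        using \<open>finite V\<close> \<open>v \<in> V\<close> edge exp_weight_edge_ge_1[OF graph]
        by (intro exp_weight_column_sum_ge) auto
    qed
    have "frac_porous_exp_dom V E \<le> real (card V) / (real (card V) / 2 + 2)"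
      using \<open>finite V\<close> column[unfolded sum_divide_distrib]
      by (intro frac_porous_exp_dom_le_column_sum) auto
    also have "\<dots> < 1"
      using \<open>card V \<le> 3\<close> by (simp add: divide_less_eq)
    finally show ?thesis .
  qed
qed

lemma acyclic_graph_no_triangle:
  assumes graph: "graph V E" and "acyclic_graph V E" and "E a b" "E b c"
  shows "\<not> E c a"
proof
  assume "E c a"
  have "walk V E [a, b, c]"
    using graph \<open>E a b\<close> \<open>E b c\<close> by (intro walk_Cons_Cons walk_singleton) (auto simp: graph_def)
  moreover have "distinct [a, b, c]"
    using graph \<open>E a b\<close> \<open>E b c\<close> \<open>E c a\<close> by (auto simp: graph_def)
  ultimately have "is_cycle V E [a, b, c]"
    using \<open>E c a\<close> by (simp add: is_cycle_def)
  then show False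
    using \<open>acyclic_graph V E\<close> by (auto simp: acyclic_graph_def)
qed

definition is_star_center :: "'a set \<Rightarrow> ('a \<Rightarrow> 'a \<Rightarrow> bool) \<Rightarrow> 'a \<Rightarrow> bool" where
  "is_star_center V E c \<longleftrightarrow> c \<in> V \<and> (\<forall>u\<in>V. \<forall>v\<in>V. E u v \<longleftrightarrow> (u = c) \<noteq> (v = c))"

lemma is_K13_iff: "is_K13 V E \<longleftrightarrow> card V = 4 \<and> (\<exists>c. is_star_center V E c)"
proof
  assume "is_K13 V E"
  then obtain f where f: "bij_betw f V {0..(3::nat)}"
    and edges: "\<forall>u\<in>V. \<forall>v\<in>V. E u v \<longleftrightarrow> (f u = 0 \<and> f v \<noteq> 0) \<or> (f v = 0 \<and> f u \<noteq> 0)"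
    unfolding is_K13_def by (elim exE conjE)
  have "0 \<in> f ` V"
    using f by (simp add: bij_betw_def)
  then obtain c where "c \<in> V" "f c = 0"
    by (elim imageE) simp
  have zero: "f u = 0 \<longleftrightarrow> u = c" if "u \<in> V" for u
    using inj_onD[OF bij_betw_imp_inj_on[OF f] _ that \<open>c \<in> V\<close>] \<open>f c = 0\<close> by auto
  have "is_star_center V E c"
    unfolding is_star_center_def
  proof (intro conjI ballI)
    fix u v assume "u \<in> V" "v \<in> V"
    then show "E u v \<longleftrightarrow> (u = c) \<noteq> (v = c)"
      using edges[rule_format, OF \<open>u \<in> V\<close> \<open>v \<in> V\<close>] zero by auto
  qed (rule \<open>c \<in> V\<close>)
  moreover have "card V = 4"
    using bij_betw_same_card[OF f] by simp
  ultimately show "card V = 4 \<and> (\<exists>c. is_star_center V E c)"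
    by blast
next
  assume "card V = 4 \<and> (\<exists>c. is_star_center V E c)"
  then obtain c where "card V = 4" and "is_star_center V E c"
    by blast
  then have "c \<in> V" and edges: "\<forall>u\<in>V. \<forall>v\<in>V. E u v \<longleftrightarrow> (u = c) \<noteq> (v = c)"
    by (simp_all add: is_star_center_def)
  have "finite V"
    using \<open>card V = 4\<close> by (intro card_ge_0_finite) simp
  then obtain h where h: "bij_betw h (V - {c}) {1..(3::nat)}"
    using finite_same_card_bij[of "V - {c}" "{1..(3::nat)}"] \<open>card V = 4\<close> \<open>c \<in> V\<close> by auto
  define f where "f = h(c := 0)"
  have "bij_betw f (V - {c}) {1..3} \<longleftrightarrow> bij_betw h (V - {c}) {1..3}"
    by (rule bij_betw_cong) (simp add: f_def)
  with h have "bij_betw f (V - {c}) {1..3}"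
    by simp
  moreover have "f c = 0"
    by (simp add: f_def)
  ultimately have "bij_betw f (V - {c} \<union> {c}) ({1..3} \<union> {0})"
    using notIn_Un_bij_betw3[of c "V - {c}" f "{1..3}"] by simp
  moreover have "V - {c} \<union> {c} = V" "{1..3} \<union> {0} = {0..(3::nat)}"
    using \<open>c \<in> V\<close> by auto
  ultimately have bij: "bij_betw f V {0..3}"
    by simp
  have zero: "f u = 0 \<longleftrightarrow> u = c" if "u \<in> V" for u
  proof (cases "u = c")
    case False
    then have "f u \<in> {1..3}"
      using bij_betw_apply[OF h] that by (simp add: f_def)
    with False show ?thesis
      by auto
  qed (simp add: \<open>f c = 0\<close>)
  show "is_K13 V E"
    unfolding is_K13_def
  proof (intro exI[of _ f] conjI ballI)
    fix u v assume "u \<in> V" "v \<in> V"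
    then show "E u v \<longleftrightarrow> (f u = 0 \<and> f v \<noteq> 0) \<or> (f v = 0 \<and> f u \<noteq> 0)"
      using edges[rule_format, OF \<open>u \<in> V\<close> \<open>v \<in> V\<close>] zero by auto
  qed (rule bij)
qed

lemma domination_number_eq_1_center:
  assumes "finite V" "domination_number V E = 1"
  obtains d where "d \<in> V" "\<And>v. v \<in> V \<Longrightarrow> v \<noteq> d \<Longrightarrow> E d v"
proof -
  obtain D where D: "dominating V E D" "card D = 1"
    using obtain_minimum_dominating_set[OF assms(1)] assms(2) by metis
  then obtain d where "D = {d}"
    by (metis One_nat_def card_1_singleton_iff)
  then show ?thesis
    using D(1) that by (auto simp: dominating_def)
qed

lemma acyclic_graph_is_star_center:
  assumes graph: "graph V E" and "acyclic_graph V E" and "d \<in> V"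
    and center: "\<And>v. v \<in> V \<Longrightarrow> v \<noteq> d \<Longrightarrow> E d v"
  shows "is_star_center V E d"
  unfolding is_star_center_def
proof (intro conjI ballI)
  fix u v assume "u \<in> V" "v \<in> V"
  have "\<not> E u v" if "u \<noteq> d" "v \<noteq> d"
  proof
    assume "E u v"
    moreover have "E v d"
      using center[OF \<open>v \<in> V\<close> that(2)] graph by (simp add: graph_def)
    ultimately show False
      using acyclic_graph_no_triangle[OF assms(1,2) center[OF \<open>u \<in> V\<close> that(1)]] by blast
  qed
  then show "E u v \<longleftrightarrow> (u = d) \<noteq> (v = d)"
    using center \<open>u \<in> V\<close> \<open>v \<in> V\<close> graph by (auto simp: graph_def)
qed (rule \<open>d \<in> V\<close>)

lemma K13_domination_numbers:
  assumes graph: "graph V E" and "is_K13 V E"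
  shows "domination_number V E = 1" "frac_porous_exp_dom V E = 1"
proof -
  obtain c where "card V = 4" and "is_star_center V E c"
    using assms(2) unfolding is_K13_iff by blast
  then have "c \<in> V" and edges: "\<forall>u\<in>V. \<forall>v\<in>V. E u v \<longleftrightarrow> (u = c) \<noteq> (v = c)"
    by (simp_all add: is_star_center_def)
  have "finite V" "V \<noteq> {}"
    using graph \<open>c \<in> V\<close> by (auto simp: graph_def)
  have "dominating V E {c}"
    unfolding dominating_def using \<open>c \<in> V\<close> edges by force
  then have "domination_number V E \<le> 1"
    using domination_number_le_card[OF \<open>finite V\<close>] by (metis card_1_singleton_iff One_nat_def)
  then show gamma: "domination_number V E = 1"
    using domination_number_pos[OF \<open>finite V\<close> \<open>V \<noteq> {}\<close>, of E] by linarith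
  have "3 \<le> card (V - {c})"
    using \<open>card V = 4\<close> \<open>c \<in> V\<close> by simp
  moreover have "\<not> E a b" if "a \<in> V - {c}" "b \<in> V - {c}" for a b
    using edges[rule_format, of a b] that by simp
  ultimately have "1 \<le> frac_porous_exp_dom V E"
    using one_le_frac_porous_exp_dom_if_independent[OF \<open>finite V\<close>, of "V - {c}"] by blast
  then show "frac_porous_exp_dom V E = 1"
    using frac_porous_exp_dom_le_domination_number[OF graph] gamma by simp
qed

lemma subcubic_center_card_le_4:
  assumes "finite V" "subcubic V E" "d \<in> V" "\<And>v. v \<in> V \<Longrightarrow> v \<noteq> d \<Longrightarrow> E d v"
  shows "card V \<le> 4"
proof -
  have "card V \<le> card (insert d {u \<in> V. E d u})"
    using assms by (intro card_mono) auto
  also have "\<dots> \<le> Suc (degree V E d)"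
    using assms(1) by (simp add: degree_def card_insert_if)
  also have "\<dots> \<le> 4"
    using assms(2,3) by (simp add: subcubic_def)
  finally show ?thesis .
qed

theorem mainTheorem5:
  fixes V :: "'a set" and E :: "'a \<Rightarrow> 'a \<Rightarrow> bool"
  assumes "tree V E" and "subcubic V E"
  shows "real (domination_number V E) = frac_porous_exp_dom V E \<longleftrightarrow> is_K13 V E"
proof -
  have graph: "graph V E" and "connected_graph V E" "acyclic_graph V E"
    using assms(1) by (auto simp: tree_def)
  then have "finite V" "V \<noteq> {}"
    by (auto simp: graph_def connected_graph_def)
  show ?thesis
  proof
    assume eq: "real (domination_number V E) = frac_porous_exp_dom V E"
    then have "domination_number V E = 1"
      using frac_porous_exp_dom_lt_domination_number[OF graph \<open>connected_graph V E\<close>]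
        domination_number_pos[OF \<open>finite V\<close> \<open>V \<noteq> {}\<close>, of E] by linarith
    then obtain d where "d \<in> V" and center: "\<And>v. v \<in> V \<Longrightarrow> v \<noteq> d \<Longrightarrow> E d v"
      using domination_number_eq_1_center[OF \<open>finite V\<close>] by blast
    have "card V \<le> 4"
      using subcubic_center_card_le_4[OF \<open>finite V\<close> assms(2) \<open>d \<in> V\<close> center] .
    moreover have "\<not> card V \<le> 3"
    proof
      assume "card V \<le> 3"
      with frac_porous_exp_dom_lt_1_if_small_star[OF graph \<open>d \<in> V\<close> center] show False
        using eq \<open>domination_number V E = 1\<close> by simp
    qed
    ultimately have "card V = 4"
      by linarith
    then show "is_K13 V E"
      unfolding is_K13_iff
      using acyclic_graph_is_star_center[OF graph \<open>acyclic_graph V E\<close> \<open>d \<in> V\<close> center] by blast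
  next
    assume "is_K13 V E"
    then show "real (domination_number V E) = frac_porous_exp_dom V E"
      using K13_domination_numbers[OF graph] by simp
  qed
qed

end
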